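(* Consider a spherically symmetric spacetime in the setting described in the context, belonging to Case 2 (that is, $\partial_v r_->0$). Then the spacetime is either of Type 1 or of Type 2, i.e. $-1<U^{(+)}_0<U^{(+)}_\infty\le U^{(-)}_\infty<U^{(-)}_0<+1$, with $U^{(+)}_\infty=U^{(-)}_\infty$ (Type 1) or $U^{(+)}_\infty<U^{(-)}_\infty$ (Type 2).
   Context: Consider a spherically symmetric spacetime with metric $ds^2=-f(v,r)A(v,r)^2dv^2+2A(v,r)\,dr\,dv+r^2d\Omega^2$, where $d\Omega^2$ is the unit 2-sphere metric, $A>0$, $\lim_{r\to\infty}f=\lim_{r\to\infty}A=1$, and $f(v,0)=1$, $\partial_rf(v,0)=0$, $\partial_rA(v,0)=0$. It is assumed that $f(v,\cdot)=0$ has exactly two roots $r_+(v)>r_-(v)$ (the outer and inner apparent horizons, AHs), so $f(v,r)=F(v,r)(r-r_+(v))(r-r_-(v))$ with $F>0$; set $h=AF>0$. Standing assumptions: (1) $\partial_v r_+<0$; (2) $\lim_{v\to\infty}r_\pm(v)=r_c$; (3) the sign of $\partial_v r_-$ never changes; (4) the limits as $v\to\infty$ of $A,F,h$ behave as analytic functions of $r$, so all $\partial_r^n h(v,r)$ converge to finite values as $v\to\infty$; $h_c:=\lim_{v\to\infty}h(v,r_c)$. Put $x=r-r_c$, $x_\pm(v)=r_\pm(v)-r_c$ (so $x_\pm\to 0$), and regard $h$ as a function of $(v,x)$. Radially outgoing null geodesics are the solutions of $dx/dv=\tfrac12 h(v,x)(x-x_+(v))(x-x_-(v))$. Compactified outgoing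 null coordinate: fix $v_0$ and work in $v\ge v_0$; set $U=\frac{2}{\pi}\arctan((v-v_0)/r_c)$ on $\{r=0,\,v\ge v_0\}$ and $U=-\frac{2}{\pi}\arctan(r/r_c)$ on $\{v=v_0,\,r>0\}$, and extend $U$ by requiring it to be constant along each radially outgoing null geodesic; $U$ ranges over $[-1,1]$. The outer and inner AHs lie at $U=U^{(\pm)}(v)$; $U^{(\pm)}_0=U^{(\pm)}(v_0)$ and $U^{(\pm)}_\infty=\lim_{v\to\infty}U^{(\pm)}(v)$. A Case 2 spacetime is of Type 1 if $U^{(+)}_\infty=U^{(-)}_\infty$ and of Type 2 if $U^{(+)}_\infty<U^{(-)}_\infty$. *)

theory Defs
  imports "HOL-Analysis.Analysis"
begin

text \<open>A radially outgoing null geodesic of ds^2 = -f A^2 dv^2 + 2 A dr dv + r^2 dOmega^2,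
  parametrised by v on the interval [a,b], staying in the region r >= 0:
  dr/dv = f A / 2.\<close>
definition out_null_geod ::
  "(real \<Rightarrow> real \<Rightarrow> real) \<Rightarrow> (real \<Rightarrow> real \<Rightarrow> real) \<Rightarrow> (real \<Rightarrow> real) \<Rightarrow> real \<Rightarrow> real \<Rightarrow> bool"
where
  "out_null_geod f A \<gamma> a b \<longleftrightarrow> a \<le> b \<and>
     (\<forall>t\<in>{a..b}. 0 \<le> \<gamma> t \<and>
        (\<gamma> has_real_derivative (f t (\<gamma> t) * A t (\<gamma> t) / 2)) (at t within {a..b}))"

text \<open>Compactified outgoing null coordinate U at the point (v,r), v >= v0, r >= 0:
  follow the outgoing null geodesic through (v,r) back to the boundary of the region
  {v >= v0, r >= 0}; it either starts at the centre r = 0 at some time a >= v0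
  (U = (2/pi) arctan((a - v0)/rc)) or on the initial slice v = v0 at radius r1
  (U = -(2/pi) arctan(r1/rc)).\<close>
definition U_coord ::
  "(real \<Rightarrow> real \<Rightarrow> real) \<Rightarrow> (real \<Rightarrow> real \<Rightarrow> real) \<Rightarrow> real \<Rightarrow> real \<Rightarrow> real \<Rightarrow> real \<Rightarrow> real"
where
  "U_coord f A v0 rc v r = (THE u. \<exists>\<gamma> a. out_null_geod f A \<gamma> a v \<and> \<gamma> v = r \<and> v0 \<le> a \<and>
      ((a = v0 \<and> u = - (2 / pi) * arctan (\<gamma> v0 / rc)) \<or>
       (\<gamma> a = 0 \<and> u = (2 / pi) * arctan ((a - v0) / rc))))"

definition real_analytic_at :: "(real \<Rightarrow> real) \<Rightarrow> real \<Rightarrow> bool" where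
  "real_analytic_at g x \<longleftrightarrow>
     (\<exists>\<delta>>0. \<exists>c::nat \<Rightarrow> real. \<forall>y. \<bar>y - x\<bar> < \<delta> \<longrightarrow> (\<lambda>n. c n * (y - x) ^ n) sums g y)"

end

theory Submission
  imports Defs
begin

text \<open>
  Outgoing null geodesics solve dr/dv = f A / 2, whose right-hand side vanishes on both apparent
  horizons. Since r_+ decreases and r_- increases, the band between them is invariant backwards in v:
  a geodesic lying in the band at time v lies strictly inside it at every earlier time, so it
  starts on the initial slice at a positive radius r, where U = -(2/pi) arctan (r / r_c) is a
  decreasing function of r. Uniqueness of solutions makes the starting radius strictly increasing
  in the radius reached at any fixed later time. Hence U along the outer horizon increases, U along
  the inner horizon decreases, the former stays below the latter, and both converge.
\<close>

section \<open>Scalar ODEs on compact intervals\<close>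

lemma neg_before_if_zeros_upcrossing:
  fixes \<phi> \<phi>' :: "real \<Rightarrow> real"
  assumes der: "\<And>s. s \<in> {a..b} \<Longrightarrow> (\<phi> has_real_derivative \<phi>' s) (at s within {a..b})"
    and upcrossing: "\<And>s. s \<in> {a..b} \<Longrightarrow> \<phi> s = 0 \<Longrightarrow> \<phi>' s > 0"
    and end_nonpos: "\<phi> b \<le> 0"
    and t: "t \<in> {a..<b}"
  shows "\<phi> t < 0"
proof (rule ccontr)
  assume not_neg: "\<not> \<phi> t < 0"
  have "continuous_on {a..b} \<phi>"
    using der by (meson DERIV_continuous continuous_on_eq_continuous_within)
  then have cont: "continuous_on {c..d} \<phi>" if "a \<le> c" "d \<le> b" for c d
    by (rule continuous_on_subset) (use that in auto)
  obtain t1 where t1: "a \<le> t1" "t1 < b" "\<phi> t1 > 0"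
  proof (cases "\<phi> t = 0")
    case False
    then show thesis using that[of t] not_neg t by auto
  next
    case True
    have tab: "t \<in> {a..b}" using t by auto
    obtain d where d: "d > 0" "\<forall>h>0. t + h \<in> {a..b} \<longrightarrow> h < d \<longrightarrow> \<phi> t < \<phi> (t + h)"
      using has_real_derivative_pos_inc_right[OF der[OF tab] upcrossing[OF tab True]] by blast
    define h where "h = min (d / 2) ((b - t) / 2)"
    have h: "h > 0" "h < d" "t + h < b" using d(1) t by (auto simp: h_def min_def field_simps)
    then have "\<phi> (t + h) > 0" using d(2) True t by auto
    then show thesis using that[of "t + h"] h t by auto
  qed
  define Z where "Z = {s \<in> {t1..b}. \<phi> s = 0}"
  have "Z \<noteq> {}"
    using IVT2'[of \<phi> b 0 t1] t1 end_nonpos cont[of t1 b] by (auto simp: Z_def)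
  moreover have "closed Z"
    unfolding Z_def by (rule continuous_closed_preimage_constant) (use cont[of t1 b] t1 in auto)
  moreover have "bdd_below Z" unfolding Z_def by (rule bdd_belowI[of _ t1]) auto
  ultimately have "Inf Z \<in> Z" and z_least: "\<And>s. s \<in> Z \<Longrightarrow> Inf Z \<le> s"
    by (simp_all add: closed_contains_Inf cInf_lower)
  define z where "z = Inf Z"
  have z: "t1 \<le> z" "z \<le> b" "\<phi> z = 0"
    using \<open>Inf Z \<in> Z\<close> unfolding z_def Z_def by auto
  with t1 have "t1 \<noteq> z" by auto
  with z have z_gt: "t1 < z" by simp
  have zab: "z \<in> {a..b}" using z t1 by auto
  obtain d where d: "d > 0" "\<forall>h>0. z - h \<in> {a..b} \<longrightarrow> h < d \<longrightarrow> \<phi> (z - h) < \<phi> z"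
    using has_real_derivative_pos_inc_left[OF der[OF zab] upcrossing[OF zab z(3)]] by blast
  define h where "h = min (d / 2) ((z - t1) / 2)"
  have h: "h > 0" "h < d" "t1 < z - h" using d(1) z_gt by (auto simp: h_def min_def field_simps)
  then have "\<phi> (z - h) < 0" using d(2) z t1 by auto
  then obtain x where "t1 \<le> x" "x \<le> z - h" "\<phi> x = 0"
    using IVT2'[of \<phi> "z - h" 0 t1] t1 h z cont[of t1 "z - h"] by auto
  then have "x \<in> Z" "x < z" using h z unfolding Z_def by auto
  then show False using z_least unfolding z_def by force
qed

definition solves_ode :: "(real \<Rightarrow> real \<Rightarrow> real) \<Rightarrow> (real \<Rightarrow> real) \<Rightarrow> real \<Rightarrow> real \<Rightarrow> bool" where
  "solves_ode g \<gamma> a b \<longleftrightarrow> (\<forall>t\<in>{a..b}. (\<gamma> has_real_derivative g t (\<gamma> t)) (at t within {a..b}))"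

lemma solves_ode_continuous_on: "solves_ode g \<gamma> a b \<Longrightarrow> continuous_on {a..b} \<gamma>"
  unfolding solves_ode_def by (meson DERIV_continuous continuous_on_eq_continuous_within)

lemma solves_ode_subinterval:
  assumes "solves_ode g \<gamma> a b" "a \<le> a'" "b' \<le> b"
  shows "solves_ode g \<gamma> a' b'"
  using assms unfolding solves_ode_def
  by (meson DERIV_subset atLeastAtMost_iff atLeastatMost_subset_iff order_trans)

lemma solves_ode_has_real_derivative_at:
  assumes "solves_ode g \<gamma> a b" "a < t" "t < b"
  shows "(\<gamma> has_real_derivative g t (\<gamma> t)) (at t)"
  using assms unfolding solves_ode_def by (metis at_within_Icc_at atLeastAtMost_iff less_eq_real_def)

lemma continuous_on_compose_uncurried:
  fixes G :: "real \<Rightarrow> real \<Rightarrow> real"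
  assumes "continuous_on UNIV (\<lambda>p. G (fst p) (snd p))" "continuous_on S y"
  shows "continuous_on S (\<lambda>s. G s (y s))"
  using continuous_on_compose2[OF assms(1), of S "\<lambda>s. (s, y s)"]
  by (simp add: continuous_on_Pair assms(2))

lemma bounded_on_rectangle:
  fixes k :: "real \<Rightarrow> real \<Rightarrow> real"
  assumes "continuous_on UNIV (\<lambda>p. k (fst p) (snd p))"
  obtains B where "\<And>t x. t \<in> {a..b} \<Longrightarrow> x \<in> {lo..hi} \<Longrightarrow> \<bar>k t x\<bar> \<le> B"
proof -
  have "compact ((\<lambda>p. k (fst p) (snd p)) ` ({a..b} \<times> {lo..hi}))"
    by (rule compact_continuous_image[OF continuous_on_subset[OF assms]]) (auto intro: compact_Times)
  then obtain B where B: "\<forall>y\<in>(\<lambda>p. k (fst p) (snd p)) ` ({a..b} \<times> {lo..hi}). norm y \<le> B"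
    unfolding bounded_iff by (metis compact_imp_bounded bounded_iff)
  show thesis
  proof (rule that)
    fix t x assume "t \<in> {a..b}" "x \<in> {lo..hi}"
    then have "(t, x) \<in> {a..b} \<times> {lo..hi}" by simp
    then show "\<bar>k t x\<bar> \<le> B" using B by force
  qed
qed

lemma lipschitz_on_rectangle:
  fixes g gx :: "real \<Rightarrow> real \<Rightarrow> real"
  assumes deriv: "\<And>t x. (g t has_real_derivative gx t x) (at x)"
    and gx_cont: "continuous_on UNIV (\<lambda>p. gx (fst p) (snd p))"
  obtains L where "\<And>t. t \<in> {a..b} \<Longrightarrow> L-lipschitz_on {lo..hi} (g t)"
proof -
  obtain B where B: "\<And>t x. t \<in> {a..b} \<Longrightarrow> x \<in> {lo..hi} \<Longrightarrow> \<bar>gx t x\<bar> \<le> B"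
    using bounded_on_rectangle[OF gx_cont] by blast
  have "(max 0 B)-lipschitz_on {lo..hi} (g t)" if t: "t \<in> {a..b}" for t
  proof (rule bounded_derivative_imp_lipschitz[where f'="\<lambda>x. (*) (gx t x)"])
    show "(g t has_derivative (*) (gx t x)) (at x within {lo..hi})" for x
      using deriv[of t x] by (simp add: has_field_derivative_def has_derivative_at_withinI)
  next
    fix x assume x: "x \<in> {lo..hi}"
    show "onorm ((*) (gx t x)) \<le> max 0 B"
    proof (rule onorm_bound)
      fix h :: real
      have "\<bar>h\<bar> * \<bar>gx t x\<bar> \<le> \<bar>h\<bar> * max 0 B"
        using B[OF t x] by (intro mult_left_mono) auto
      then show "norm (gx t x * h) \<le> max 0 B * norm h" by (simp add: abs_mult mult.commute)
    qed simp
  qed auto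
  then show thesis using that by blast
qed

lemma gronwall_zero:
  fixes w w' :: "real \<Rightarrow> real"
  assumes cont: "continuous_on {a..b} w"
    and deriv: "\<And>s. a < s \<Longrightarrow> s < b \<Longrightarrow> (w has_real_derivative w' s) (at s)"
    and growth: "\<And>s. a < s \<Longrightarrow> s < b \<Longrightarrow> \<bar>w' s\<bar> \<le> K * w s"
    and nonneg: "\<And>s. 0 \<le> w s"
    and c: "c \<in> {a..b}" "w c = 0"
    and t: "t \<in> {a..b}"
  shows "w t = 0"
proof (cases "c \<le> t")
  case True
  define p where "p s = w s * exp (- K * s)" for s
  have "p t \<le> p c"
  proof (rule DERIV_nonpos_imp_decreasing_open[OF True])
    fix s assume s: "c < s" "s < t"
    then have s': "a < s" "s < b" using c t by auto
    have "(p has_real_derivative (w' s - K * w s) * exp (- K * s)) (at s)"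
      unfolding p_def by (auto intro!: derivative_eq_intros deriv[OF s'] simp: algebra_simps)
    moreover have "(w' s - K * w s) * exp (- K * s) \<le> 0"
      using growth[OF s'] by (simp add: mult_nonpos_nonneg abs_le_iff)
    ultimately show "\<exists>y. (p has_real_derivative y) (at s) \<and> y \<le> 0" by blast
  qed (use c t in \<open>auto simp: p_def intro!: continuous_intros continuous_on_subset[OF cont]\<close>)
  then show ?thesis using c nonneg[of t] by (simp add: p_def mult_le_0_iff)
next
  case False
  then have "t \<le> c" by simp
  define p where "p s = w s * exp (K * s)" for s
  have "p t \<le> p c"
  proof (rule DERIV_nonneg_imp_increasing_open[OF \<open>t \<le> c\<close>])
    fix s assume s: "t < s" "s < c"
    then have s': "a < s" "s < b" using c t by auto
    have "(p has_real_derivative (w' s + K * w s) * exp (K * s)) (at s)"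
      unfolding p_def by (auto intro!: derivative_eq_intros deriv[OF s'] simp: algebra_simps)
    moreover have "(w' s + K * w s) * exp (K * s) \<ge> 0"
      using growth[OF s'] by (simp add: abs_le_iff)
    ultimately show "\<exists>y. (p has_real_derivative y) (at s) \<and> y \<ge> 0" by blast
  qed (use \<open>t \<le> c\<close> c t in \<open>auto simp: p_def intro!: continuous_intros continuous_on_subset[OF cont]\<close>)
  then show ?thesis using c nonneg[of t] by (simp add: p_def mult_le_0_iff)
qed

lemma solves_ode_unique:
  fixes g gx :: "real \<Rightarrow> real \<Rightarrow> real"
  assumes deriv: "\<And>t x. (g t has_real_derivative gx t x) (at x)"
    and gx_cont: "continuous_on UNIV (\<lambda>p. gx (fst p) (snd p))"
    and x: "solves_ode g x a b" and y: "solves_ode g y a b"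
    and c: "c \<in> {a..b}" "x c = y c"
    and t: "t \<in> {a..b}"
  shows "x t = y t"
proof -
  have cx: "continuous_on {a..b} x" and cy: "continuous_on {a..b} y"
    using x y by (auto intro: solves_ode_continuous_on)
  have "bounded (x ` {a..b} \<union> y ` {a..b})"
    using cx cy by (auto intro!: compact_imp_bounded compact_continuous_image)
  then obtain K where K0: "\<forall>u \<in> x ` {a..b} \<union> y ` {a..b}. \<bar>u\<bar> \<le> K"
    unfolding bounded_iff by auto
  have K: "x s \<in> {-K..K} \<and> y s \<in> {-K..K}" if "s \<in> {a..b}" for s
  proof -
    have "\<bar>x s\<bar> \<le> K" "\<bar>y s\<bar> \<le> K" using K0 that by auto
    then show ?thesis by (simp add: abs_le_iff)
  qed
  obtain L where L: "\<And>s. s \<in> {a..b} \<Longrightarrow> L-lipschitz_on {-K..K} (g s)"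
    using lipschitz_on_rectangle[OF deriv gx_cont] by blast
  define w where "w s = (x s - y s)\<^sup>2" for s
  define w' where "w' s = 2 * (x s - y s) * (g s (x s) - g s (y s))" for s
  have w_deriv: "(w has_real_derivative w' s) (at s)" if "a < s" "s < b" for s
    unfolding w_def w'_def
    using solves_ode_has_real_derivative_at[OF x that] solves_ode_has_real_derivative_at[OF y that]
    by (auto intro!: derivative_eq_intros)
  have w'_bound: "\<bar>w' s\<bar> \<le> 2 * L * w s" if "a < s" "s < b" for s
  proof -
    have lip: "\<bar>g s (x s) - g s (y s)\<bar> \<le> L * \<bar>x s - y s\<bar>"
      using lipschitz_onD[OF L] K that by (simp add: dist_real_def)
    have "\<bar>w' s\<bar> = 2 * (\<bar>x s - y s\<bar> * \<bar>g s (x s) - g s (y s)\<bar>)"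
      unfolding w'_def abs_mult by (simp add: mult.assoc)
    also have "\<dots> \<le> 2 * (\<bar>x s - y s\<bar> * (L * \<bar>x s - y s\<bar>))"
      using lip by (simp add: mult_left_mono)
    also have "\<dots> = 2 * L * w s" by (simp add: w_def power2_eq_square abs_mult_self_eq mult_ac)
    finally show ?thesis .
  qed
  have w_cont: "continuous_on {a..b} w" unfolding w_def by (intro continuous_intros cx cy)
  have "w t = 0"
    by (rule gronwall_zero[OF w_cont w_deriv w'_bound _ c(1) _ t]) (use c in \<open>simp_all add: w_def\<close>)
  then show ?thesis by (simp add: w_def)
qed

lemma solves_ode_less_backward:
  fixes g gx :: "real \<Rightarrow> real \<Rightarrow> real"
  assumes deriv: "\<And>t x. (g t has_real_derivative gx t x) (at x)"
    and gx_cont: "continuous_on UNIV (\<lambda>p. gx (fst p) (snd p))"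
    and x: "solves_ode g x a b" and y: "solves_ode g y a b"
    and "a \<le> b" and less: "x b < y b"
  shows "x a < y a"
proof (rule ccontr)
  assume "\<not> x a < y a"
  moreover have "continuous_on {a..b} (\<lambda>t. x t - y t)"
    using solves_ode_continuous_on[OF x] solves_ode_continuous_on[OF y] by (intro continuous_intros)
  ultimately obtain c where "c \<in> {a..b}" "x c = y c"
    using IVT2'[of "\<lambda>t. x t - y t" b 0 a] less \<open>a \<le> b\<close> by auto
  then have "x b = y b" using solves_ode_unique[OF deriv gx_cont x y] \<open>a \<le> b\<close> by simp
  with less show False by simp
qed

section \<open>Existence by Picard iteration\<close>

primrec picard_iterate :: "(real \<Rightarrow> real \<Rightarrow> real) \<Rightarrow> real \<Rightarrow> real \<Rightarrow> nat \<Rightarrow> real \<Rightarrow> real" where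
  "picard_iterate G b r0 0 t = r0"
| "picard_iterate G b r0 (Suc n) t = r0 - integral {t..b} (\<lambda>s. G s (picard_iterate G b r0 n s))"

lemma continuous_on_picard_iterate:
  assumes "continuous_on UNIV (\<lambda>p. G (fst p) (snd p))"
  shows "continuous_on {a..b} (picard_iterate G b r0 n)"
proof (induction n)
  case (Suc n)
  then have "continuous_on {a..b} (\<lambda>s. G s (picard_iterate G b r0 n s))"
    by (rule continuous_on_compose_uncurried[OF assms])
  then show ?case
    by (simp add: continuous_on_diff indefinite_integral_continuous_1' integrable_continuous_interval)
qed simp

lemma integral_power_diff_right:
  assumes "t \<le> b"
  shows "integral {t..b} (\<lambda>s. (b - s) ^ k) = (b - t) ^ Suc k / Suc k"
proof -
  have "((\<lambda>s. (b - s) ^ k) has_integral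
      (- ((b - b) ^ Suc k / Suc k)) - (- ((b - t) ^ Suc k / Suc k))) {t..b}"
    by (rule fundamental_theorem_of_calculus[OF assms])
      (auto intro!: derivative_eq_intros simp del: power_Suc
        simp flip: has_real_derivative_iff_has_vector_derivative)
  then show ?thesis by (simp add: integral_unique)
qed

lemma picard_iterate_step_bound:
  fixes G :: "real \<Rightarrow> real \<Rightarrow> real"
  assumes G_cont: "continuous_on UNIV (\<lambda>p. G (fst p) (snd p))"
    and lip: "\<And>t. t \<in> {a..b} \<Longrightarrow> L-lipschitz_on UNIV (G t)"
    and B: "\<And>t. t \<in> {a..b} \<Longrightarrow> \<bar>G t r0\<bar> \<le> B"
    and t: "t \<in> {a..b}"
  shows "\<bar>picard_iterate G b r0 (Suc n) t - picard_iterate G b r0 n t\<bar>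
    \<le> B * L ^ n * (b - t) ^ Suc n / fact (Suc n)"
  using t
proof (induction n arbitrary: t)
  case 0
  have "norm (integral {t..b} (\<lambda>s. G s r0)) \<le> integral {t..b} (\<lambda>s. B)"
    by (rule integral_norm_bound_integral) (use 0 B in \<open>auto intro!: integrable_continuous_interval
        continuous_on_compose_uncurried[OF G_cont] continuous_intros\<close>)
  then show ?case using 0 by (simp add: mult.commute)
next
  case (Suc n)
  let ?Y = "picard_iterate G b r0"
  have L: "0 \<le> L" using lipschitz_on_nonneg[OF lip[OF Suc.prems]] .
  have int: "(\<lambda>s. G s (?Y m s)) integrable_on {t..b}" for m
    by (intro integrable_continuous_interval continuous_on_compose_uncurried[OF G_cont]
        continuous_on_picard_iterate[OF G_cont])
  have "\<bar>?Y (Suc (Suc n)) t - ?Y (Suc n) t\<bar>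
      = norm (integral {t..b} (\<lambda>s. G s (?Y (Suc n) s) - G s (?Y n s)))"
    unfolding picard_iterate.simps(2)[of G b r0 "Suc n" t] picard_iterate.simps(2)[of G b r0 n t]
    by (simp add: integral_diff[OF int int] abs_minus_commute del: picard_iterate.simps)
  also have "\<dots> \<le> integral {t..b} (\<lambda>s. L * (B * L ^ n * (b - s) ^ Suc n / fact (Suc n)))"
  proof (intro integral_norm_bound_integral integrable_diff int)
    show "(\<lambda>s. L * (B * L ^ n * (b - s) ^ Suc n / fact (Suc n))) integrable_on {t..b}"
      by (intro integrable_continuous_interval continuous_intros) auto
    fix s assume s: "s \<in> {t..b}"
    then have "s \<in> {a..b}" using Suc.prems by auto
    then have "\<bar>G s (?Y (Suc n) s) - G s (?Y n s)\<bar> \<le> L * \<bar>?Y (Suc n) s - ?Y n s\<bar>"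
      using lipschitz_onD[OF lip] by (simp add: dist_real_def)
    also have "\<dots> \<le> L * (B * L ^ n * (b - s) ^ Suc n / fact (Suc n))"
      using Suc.IH[OF \<open>s \<in> {a..b}\<close>] L by (rule mult_left_mono)
    finally show "norm (G s (?Y (Suc n) s) - G s (?Y n s)) \<le> \<dots>" by simp
  qed
  also have "\<dots> = (L * B * L ^ n / fact (Suc n)) * integral {t..b} (\<lambda>s. (b - s) ^ Suc n)"
    by (simp flip: integral_mult_right add: mult_ac)
  also have "\<dots> = (L * B * L ^ n / fact (Suc n)) * ((b - t) ^ Suc (Suc n) / Suc (Suc n))"
    using Suc.prems by (simp only: integral_power_diff_right atLeastAtMost_iff)
  also have "\<dots> = B * L ^ Suc n * (b - t) ^ Suc (Suc n) / fact (Suc (Suc n))"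
    by (simp add: field_simps)
  finally show ?case .
qed

lemma picard_iterate_uniform_limit:
  fixes G :: "real \<Rightarrow> real \<Rightarrow> real"
  assumes G_cont: "continuous_on UNIV (\<lambda>p. G (fst p) (snd p))"
    and lip: "\<And>t. t \<in> {a..b} \<Longrightarrow> L-lipschitz_on UNIV (G t)"
    and "a \<le> b"
  obtains y where "uniform_limit {a..b} (picard_iterate G b r0) y sequentially"
proof -
  let ?Y = "picard_iterate G b r0"
  have L: "0 \<le> L" using lipschitz_on_nonneg[OF lip[of a]] \<open>a \<le> b\<close> by simp
  obtain B0 where B0: "\<And>t x. t \<in> {a..b} \<Longrightarrow> x \<in> {r0..r0} \<Longrightarrow> \<bar>G t x\<bar> \<le> B0"
    using bounded_on_rectangle[OF G_cont] by blast
  define B where "B = max 0 B0"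
  have B: "\<bar>G t r0\<bar> \<le> B" if "t \<in> {a..b}" for t
    using B0[OF that, of r0] by (simp add: B_def)
  define M where "M n = B * (b - a) * (L * (b - a)) ^ n / fact n" for n
  have step: "norm (?Y (Suc n) t - ?Y n t) \<le> M n" if t: "t \<in> {a..b}" for n t
  proof -
    have "\<bar>?Y (Suc n) t - ?Y n t\<bar> \<le> B * L ^ n * (b - t) ^ Suc n / fact (Suc n)"
      by (rule picard_iterate_step_bound[OF G_cont lip B t])
    also have "\<dots> \<le> B * L ^ n * (b - a) ^ Suc n / fact n"
      using t L \<open>a \<le> b\<close> by (intro frac_le mult_left_mono power_mono fact_mono) (auto simp: B_def)
    also have "\<dots> = M n" by (simp add: M_def power_mult_distrib mult_ac)
    finally show ?thesis by simp
  qed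
  have "summable M"
    unfolding M_def using summable_mult[OF summable_exp[of "L * (b - a)"], of "B * (b - a)"]
    by (simp add: divide_inverse mult_ac)
  with step have "uniform_limit {a..b} (\<lambda>n t. \<Sum>i<n. ?Y (Suc i) t - ?Y i t)
      (\<lambda>t. \<Sum>i. ?Y (Suc i) t - ?Y i t) sequentially"
    by (rule Weierstrass_m_test)
  then have "uniform_limit {a..b} (\<lambda>n t. r0 + (\<Sum>i<n. ?Y (Suc i) t - ?Y i t))
      (\<lambda>t. r0 + (\<Sum>i. ?Y (Suc i) t - ?Y i t)) sequentially"
    by (intro uniform_limit_intros)
  moreover have "r0 + (\<Sum>i<n. ?Y (Suc i) t - ?Y i t) = ?Y n t" for n t
    using sum_lessThan_telescope[of "\<lambda>i. ?Y i t" n] by (simp del: picard_iterate.simps(2))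
  ultimately show thesis using that by simp
qed

lemma uniform_limit_lipschitz_compose:
  fixes G :: "real \<Rightarrow> real \<Rightarrow> real"
  assumes lip: "\<And>t. t \<in> S \<Longrightarrow> L-lipschitz_on UNIV (G t)"
    and lim: "uniform_limit S Y y F"
  shows "uniform_limit S (\<lambda>n t. G t (Y n t)) (\<lambda>t. G t (y t)) F"
proof (rule uniform_limitI)
  fix e :: real assume "e > 0"
  have "\<forall>\<^sub>F n in F. \<forall>t\<in>S. dist (Y n t) (y t) < e / (\<bar>L\<bar> + 1)"
    using uniform_limitD[OF lim] \<open>e > 0\<close> by simp
  then show "\<forall>\<^sub>F n in F. \<forall>t\<in>S. dist (G t (Y n t)) (G t (y t)) < e"
  proof (rule eventually_mono, intro ballI)
    fix n t assume close: "\<forall>t\<in>S. dist (Y n t) (y t) < e / (\<bar>L\<bar> + 1)" and t: "t \<in> S"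
    have "dist (G t (Y n t)) (G t (y t)) \<le> \<bar>L\<bar> * dist (Y n t) (y t)"
      using lipschitz_onD[OF lip[OF t]] by (meson abs_ge_self dual_order.trans mult_right_mono zero_le_dist UNIV_I)
    also have "\<dots> \<le> \<bar>L\<bar> * (e / (\<bar>L\<bar> + 1))"
      using close t by (intro mult_left_mono) auto
    also have "\<dots> < e" using \<open>e > 0\<close> by (simp add: field_simps)
    finally show "dist (G t (Y n t)) (G t (y t)) < e" .
  qed
qed

lemma solves_ode_if_integral_equation:
  fixes G :: "real \<Rightarrow> real \<Rightarrow> real"
  assumes G_cont: "continuous_on UNIV (\<lambda>p. G (fst p) (snd p))"
    and cont: "continuous_on {a..b} \<gamma>"
    and eq: "\<And>t. t \<in> {a..b} \<Longrightarrow> \<gamma> t = r0 - integral {t..b} (\<lambda>s. G s (\<gamma> s))"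
  shows "solves_ode G \<gamma> a b"
  unfolding solves_ode_def
proof
  fix t assume t: "t \<in> {a..b}"
  have "((\<lambda>t. r0 - integral {t..b} (\<lambda>s. G s (\<gamma> s))) has_real_derivative G t (\<gamma> t))
      (at t within {a..b})"
    using integral_has_real_derivative'[OF continuous_on_compose_uncurried[OF G_cont cont] t]
    by (auto intro!: derivative_eq_intros)
  then show "(\<gamma> has_real_derivative G t (\<gamma> t)) (at t within {a..b})"
    by (rule has_field_derivative_transform_within[where d=1]) (use t eq in auto)
qed

lemma solves_ode_exists_backward:
  fixes G :: "real \<Rightarrow> real \<Rightarrow> real"
  assumes G_cont: "continuous_on UNIV (\<lambda>p. G (fst p) (snd p))"
    and lip: "\<And>t. t \<in> {a..b} \<Longrightarrow> L-lipschitz_on UNIV (G t)"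
    and "a \<le> b"
  obtains \<gamma> where "solves_ode G \<gamma> a b" "\<gamma> b = r0"
proof -
  let ?Y = "picard_iterate G b r0"
  obtain y where lim: "uniform_limit {a..b} ?Y y sequentially"
    using picard_iterate_uniform_limit[OF G_cont lip \<open>a \<le> b\<close>] by blast
  have y_cont: "continuous_on {a..b} y"
    by (rule uniform_limit_theorem[OF _ lim])
      (auto intro!: always_eventually continuous_on_picard_iterate[OF G_cont])
  have eq: "y t = r0 - integral {t..b} (\<lambda>s. G s (y s))" if t: "t \<in> {a..b}" for t
  proof -
    have "uniform_limit {t..b} (\<lambda>n s. G s (?Y n s)) (\<lambda>s. G s (y s)) sequentially"
      using t by (intro uniform_limit_lipschitz_compose[OF lip] uniform_limit_on_subset[OF lim]) auto
    then obtain I J where I: "\<And>n. ((\<lambda>s. G s (?Y n s)) has_integral I n) {t..b}"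
        and J: "((\<lambda>s. G s (y s)) has_integral J) {t..b}" and "I \<longlonglongrightarrow> J"
      by (rule uniform_limit_integral) (auto intro: continuous_on_compose_uncurried[OF G_cont]
          continuous_on_picard_iterate[OF G_cont])
    then have "(\<lambda>n. ?Y (Suc n) t) \<longlonglongrightarrow> r0 - J"
      by (simp add: integral_unique[OF I] tendsto_diff del: picard_iterate.simps(1))
    moreover have "(\<lambda>n. ?Y (Suc n) t) \<longlonglongrightarrow> y t"
      using tendsto_uniform_limitI[OF lim t] by (rule LIMSEQ_Suc)
    ultimately show ?thesis using LIMSEQ_unique integral_unique[OF J] by metis
  qed
  show thesis
  proof (rule that)
    show "solves_ode G y a b" by (rule solves_ode_if_integral_equation[OF G_cont y_cont eq])
    show "y b = r0" using eq[of b] \<open>a \<le> b\<close> by simp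
  qed
qed

section \<open>Trapping between the apparent horizons\<close>

lemma lipschitz_on_clamp: "1-lipschitz_on S (clamp a b)"
  by (rule lipschitz_onI) (simp_all add: dist_clamps_le_dist_args)

lemma solves_ode_clamped_exists_backward:
  fixes g gx :: "real \<Rightarrow> real \<Rightarrow> real"
  assumes g_cont: "continuous_on UNIV (\<lambda>p. g (fst p) (snd p))"
    and deriv: "\<And>t x. (g t has_real_derivative gx t x) (at x)"
    and gx_cont: "continuous_on UNIV (\<lambda>p. gx (fst p) (snd p))"
    and "a \<le> b" "m \<le> M"
  obtains \<gamma> where "solves_ode (\<lambda>t x. g t (clamp m M x)) \<gamma> a b" "\<gamma> b = r"
proof -
  have "continuous_on UNIV (clamp m M)"
    using clamp_continuous_on[OF continuous_on_id] by simp
  then have "continuous_on UNIV (\<lambda>p::real \<times> real. clamp m M (snd p))"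
    by (rule continuous_on_compose2[OF _ continuous_on_snd[OF continuous_on_id]]) auto
  then have "continuous_on UNIV (\<lambda>p. (\<lambda>q. g (fst q) (snd q)) (fst p, clamp m M (snd p)))"
    by (intro continuous_on_compose2[OF g_cont] continuous_on_Pair continuous_on_fst) auto
  then have G_cont: "continuous_on UNIV (\<lambda>p. g (fst p) (clamp m M (snd p)))"
    by simp
  obtain L where L: "\<And>t. t \<in> {a..b} \<Longrightarrow> L-lipschitz_on {m..M} (g t)"
    using lipschitz_on_rectangle[OF deriv gx_cont] by blast
  have "(L * 1)-lipschitz_on UNIV (\<lambda>x. g t (clamp m M x))" if "t \<in> {a..b}" for t
  proof -
    have "clamp m M ` UNIV \<subseteq> {m..M}"
      using clamp_in_interval[of m M] \<open>m \<le> M\<close> by auto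
    from lipschitz_on_compose[OF lipschitz_on_clamp lipschitz_on_subset[OF L[OF that] this]]
    show ?thesis by (simp add: o_def)
  qed
  then show thesis
    using solves_ode_exists_backward[where G="\<lambda>t x. g t (clamp m M x)", OF G_cont _ \<open>a \<le> b\<close>] that
    by blast
qed

locale horizon_ode =
  fixes g gx :: "real \<Rightarrow> real \<Rightarrow> real" and rp rm rp' rm' :: "real \<Rightarrow> real"
  assumes g_cont: "continuous_on UNIV (\<lambda>p. g (fst p) (snd p))"
    and g_deriv: "\<And>t x. (g t has_real_derivative gx t x) (at x)"
    and gx_cont: "continuous_on UNIV (\<lambda>p. gx (fst p) (snd p))"
    and rp_deriv: "\<And>t. (rp has_real_derivative rp' t) (at t)"
    and rp'_neg: "\<And>t. rp' t < 0"
    and rm_deriv: "\<And>t. (rm has_real_derivative rm' t) (at t)"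
    and rm'_pos: "\<And>t. rm' t > 0"
    and g_rp: "\<And>t. g t (rp t) = 0"
    and g_rm: "\<And>t. g t (rm t) = 0"
    and rm_less_rp: "\<And>t. rm t < rp t"
begin

lemma rp_antimono: "s \<le> t \<Longrightarrow> rp t \<le> rp s"
  using DERIV_neg_imp_decreasing[of s t rp] rp_deriv rp'_neg by (cases "s = t") (auto intro: less_imp_le)

lemma rm_mono: "s \<le> t \<Longrightarrow> rm s \<le> rm t"
  using DERIV_pos_imp_increasing[of s t rm] rm_deriv rm'_pos by (cases "s = t") (auto intro: less_imp_le)

lemma between_horizons_if_vanishing_on_horizons:
  assumes sol: "solves_ode G \<gamma> a b"
    and G_rp: "\<And>t. t \<in> {a..b} \<Longrightarrow> G t (rp t) = 0"
    and G_rm: "\<And>t. t \<in> {a..b} \<Longrightarrow> G t (rm t) = 0"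
    and end_between: "rm b \<le> \<gamma> b" "\<gamma> b \<le> rp b"
    and t: "t \<in> {a..<b}"
  shows "rm t < \<gamma> t \<and> \<gamma> t < rp t"
proof
  have \<gamma>_deriv: "(\<gamma> has_real_derivative G s (\<gamma> s)) (at s within {a..b})" if "s \<in> {a..b}" for s
    using sol that unfolding solves_ode_def by blast
  have "rm t - \<gamma> t < 0"
  proof (rule neg_before_if_zeros_upcrossing[where \<phi>="\<lambda>s. rm s - \<gamma> s" and \<phi>'="\<lambda>s. rm' s - G s (\<gamma> s)"])
    show "((\<lambda>s. rm s - \<gamma> s) has_real_derivative rm' s - G s (\<gamma> s)) (at s within {a..b})"
      if "s \<in> {a..b}" for s
      using DERIV_diff[OF has_field_derivative_at_within[OF rm_deriv] \<gamma>_deriv[OF that]] .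
    show "rm' s - G s (\<gamma> s) > 0" if "s \<in> {a..b}" "rm s - \<gamma> s = 0" for s
      using that G_rm[of s] rm'_pos[of s] by simp
  qed (use end_between t in auto)
  then show "rm t < \<gamma> t" by simp
  have "\<gamma> t - rp t < 0"
  proof (rule neg_before_if_zeros_upcrossing[where \<phi>="\<lambda>s. \<gamma> s - rp s" and \<phi>'="\<lambda>s. G s (\<gamma> s) - rp' s"])
    show "((\<lambda>s. \<gamma> s - rp s) has_real_derivative G s (\<gamma> s) - rp' s) (at s within {a..b})"
      if "s \<in> {a..b}" for s
      using DERIV_diff[OF \<gamma>_deriv[OF that] has_field_derivative_at_within[OF rp_deriv]] .
    show "G s (\<gamma> s) - rp' s > 0" if "s \<in> {a..b}" "\<gamma> s - rp s = 0" for s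
      using that G_rp[of s] rp'_neg[of s] by simp
  qed (use end_between t in auto)
  then show "\<gamma> t < rp t" by simp
qed

lemma trapped_solution_exists:
  assumes "a \<le> b" "rm b \<le> r" "r \<le> rp b"
  obtains \<gamma> where "solves_ode g \<gamma> a b" "\<gamma> b = r"
    "\<And>t. t \<in> {a..<b} \<Longrightarrow> rm t < \<gamma> t \<and> \<gamma> t < rp t"
    "\<And>t. t \<in> {a..b} \<Longrightarrow> rm t \<le> \<gamma> t \<and> \<gamma> t \<le> rp t"
proof -
  \<comment> \<open>The clamp only makes the field globally Lipschitz for the Picard iteration; it is inactive
    along the trapped solution.\<close>
  define G where "G t x = g t (clamp (rm a) (rp a) x)" for t x
  have horizons_in: "rm t \<in> {rm a..rp a} \<and> rp t \<in> {rm a..rp a}" if "a \<le> t" for t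
    using rm_mono[OF that] rp_antimono[OF that] rm_less_rp[of t] by auto
  have G_eq: "G t x = g t x" if "x \<in> {rm a..rp a}" for t x
    using that by (simp add: G_def)
  obtain \<gamma> where sol: "solves_ode G \<gamma> a b" and end_val: "\<gamma> b = r"
    using solves_ode_clamped_exists_backward[OF g_cont g_deriv gx_cont \<open>a \<le> b\<close>]
      less_imp_le[OF rm_less_rp] unfolding G_def by blast
  have strict: "rm t < \<gamma> t \<and> \<gamma> t < rp t" if "t \<in> {a..<b}" for t
    by (rule between_horizons_if_vanishing_on_horizons[OF sol _ _ _ _ that])
      (use assms end_val horizons_in in \<open>auto simp: G_eq g_rp g_rm\<close>)
  have closed: "rm t \<le> \<gamma> t \<and> \<gamma> t \<le> rp t" if "t \<in> {a..b}" for t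
    using strict[of t] that assms end_val by (cases "t = b") auto
  have "solves_ode g \<gamma> a b"
    unfolding solves_ode_def
  proof
    fix t assume t: "t \<in> {a..b}"
    have "\<gamma> t \<in> {rm a..rp a}" using closed[OF t] horizons_in[of t] t by auto
    then have "G t (\<gamma> t) = g t (\<gamma> t)" by (rule G_eq)
    with sol t show "(\<gamma> has_real_derivative g t (\<gamma> t)) (at t within {a..b})"
      unfolding solves_ode_def by metis
  qed
  then show thesis using end_val strict closed by (rule that)
qed

end

section \<open>The compactified null coordinate\<close>

lemma strict_mono_bounded_tendsto:
  fixes h :: "real \<Rightarrow> real"
  assumes mono: "\<And>x y. a \<le> x \<Longrightarrow> x < y \<Longrightarrow> h x < h y"
    and bounded: "\<And>x. a \<le> x \<Longrightarrow> h x \<le> K"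
  obtains l where "(h \<longlongrightarrow> l) at_top" "\<And>x. a \<le> x \<Longrightarrow> h x < l"
proof
  let ?l = "Sup (h ` {a..})"
  have bdd: "bdd_above (h ` {a..})" using bounded by (intro bdd_aboveI[of _ K]) auto
  have le: "h x \<le> ?l" if "a \<le> x" for x using bdd that by (auto intro: cSup_upper)
  show "h x < ?l" if "a \<le> x" for x
    using mono[OF that, of "x + 1"] le[of "x + 1"] that by simp
  show "(h \<longlongrightarrow> ?l) at_top"
  proof (rule order_tendstoI)
    fix y assume "y < ?l"
    then obtain x where x: "a \<le> x" "y < h x" using less_cSup_iff[OF _ bdd] by auto
    then have "\<forall>z\<ge>x. y < h z" using mono[OF x(1)] by (metis order.order_iff_strict order.strict_trans)
    then show "\<forall>\<^sub>F z in at_top. y < h z" unfolding eventually_at_top_linorder by blast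
  next
    fix y assume "?l < y"
    then have "\<forall>z\<ge>a. h z < y" using le by force
    then show "\<forall>\<^sub>F z in at_top. h z < y" unfolding eventually_at_top_linorder by blast
  qed
qed

definition U_initial :: "real \<Rightarrow> real \<Rightarrow> real" where
  "U_initial rc r = - (2 / pi) * arctan (r / rc)"

lemma U_initial_less_iff:
  assumes "0 < rc"
  shows "U_initial rc x < U_initial rc y \<longleftrightarrow> y < x"
  using assms by (simp add: U_initial_def arctan_less_iff divide_less_cancel)

lemma U_initial_gt_minus_one: "-1 < U_initial rc r"
  using arctan_ubound[of "r / rc"] by (simp add: U_initial_def field_simps)

lemma U_initial_less_one:
  assumes "0 < r" "0 < rc"
  shows "U_initial rc r < 1"
proof -
  have "arctan 0 < arctan (r / rc)" using assms by (simp add: arctan_less_iff)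
  then have "0 < 2 * arctan (r / rc) / pi" by simp
  then show ?thesis by (simp add: U_initial_def)
qed

locale case2_spacetime = horizon_ode g gx rp rm rp' rm' for g gx rp rm rp' rm' +
  fixes f A :: "real \<Rightarrow> real \<Rightarrow> real" and rc v0 :: real
  assumes g_eq: "\<And>t x. g t x = f t x * A t x / 2"
    and rm_pos: "\<And>t. 0 < rm t"
    and rm_tendsto: "(rm \<longlongrightarrow> rc) at_top"
begin

lemma rc_pos: "0 < rc"
proof -
  have "rm v0 \<le> rc"
    by (rule tendsto_lowerbound[OF rm_tendsto])
      (auto simp: eventually_at_top_linorder intro: rm_mono)
  then show ?thesis using rm_pos[of v0] by simp
qed

lemma out_null_geod_iff:
  "out_null_geod f A \<gamma> a b \<longleftrightarrow> a \<le> b \<and> (\<forall>t\<in>{a..b}. 0 \<le> \<gamma> t) \<and> solves_ode g \<gamma> a b"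
  unfolding out_null_geod_def solves_ode_def g_eq by auto

lemma U_coord_eq_U_initial:
  assumes sol: "solves_ode g \<gamma> v0 v" and "v0 \<le> v" and pos: "\<And>t. t \<in> {v0..v} \<Longrightarrow> 0 < \<gamma> t"
  shows "U_coord f A v0 rc v (\<gamma> v) = U_initial rc (\<gamma> v0)"
  unfolding U_coord_def
\<comment> \<open>By uniqueness every geodesic admitted by the description agrees with \<gamma> on its interval, and
  positivity of \<gamma> excludes the branch starting at the centre.\<close>
proof (rule the_equality)
  show "\<exists>\<delta> a. out_null_geod f A \<delta> a v \<and> \<delta> v = \<gamma> v \<and> v0 \<le> a \<and>
      (a = v0 \<and> U_initial rc (\<gamma> v0) = - (2 / pi) * arctan (\<delta> v0 / rc) \<or>
       \<delta> a = 0 \<and> U_initial rc (\<gamma> v0) = 2 / pi * arctan ((a - v0) / rc))"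
    using sol \<open>v0 \<le> v\<close> pos by (intro exI[of _ \<gamma>] exI[of _ v0]) (force simp: out_null_geod_iff U_initial_def)
next
  fix u assume "\<exists>\<delta> a. out_null_geod f A \<delta> a v \<and> \<delta> v = \<gamma> v \<and> v0 \<le> a \<and>
      (a = v0 \<and> u = - (2 / pi) * arctan (\<delta> v0 / rc) \<or> \<delta> a = 0 \<and> u = 2 / pi * arctan ((a - v0) / rc))"
  then obtain \<delta> a where \<delta>: "solves_ode g \<delta> a v" "a \<le> v" "\<delta> v = \<gamma> v" "v0 \<le> a"
    and cases: "a = v0 \<and> u = - (2 / pi) * arctan (\<delta> v0 / rc) \<or> \<delta> a = 0 \<and> u = 2 / pi * arctan ((a - v0) / rc)"
    by (auto simp: out_null_geod_iff)
  have same: "\<delta> t = \<gamma> t" if "t \<in> {a..v}" for t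
    using solves_ode_unique[OF g_deriv gx_cont \<delta>(1) solves_ode_subinterval[OF sol \<delta>(4) order.refl] _ \<delta>(3) that]
      \<delta>(2) by simp
  have "\<gamma> a \<noteq> 0" using pos \<delta> by force
  with cases same \<delta>(2) show "u = U_initial rc (\<gamma> v0)" by (auto simp: U_initial_def)
qed

lemma horizon_band_solution:
  assumes "v0 \<le> v" "rm v \<le> r" "r \<le> rp v"
  obtains \<gamma> where "solves_ode g \<gamma> v0 v" "\<gamma> v = r"
    "\<And>t. t \<in> {v0..<v} \<Longrightarrow> rm t < \<gamma> t \<and> \<gamma> t < rp t"
    "U_coord f A v0 rc v r = U_initial rc (\<gamma> v0)"
proof -
  obtain \<gamma> where \<gamma>: "solves_ode g \<gamma> v0 v" "\<gamma> v = r"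
      "\<And>t. t \<in> {v0..<v} \<Longrightarrow> rm t < \<gamma> t \<and> \<gamma> t < rp t"
      "\<And>t. t \<in> {v0..v} \<Longrightarrow> rm t \<le> \<gamma> t \<and> \<gamma> t \<le> rp t"
    using trapped_solution_exists[OF assms] by blast
  have "0 < \<gamma> t" if "t \<in> {v0..v}" for t using \<gamma>(4)[OF that] rm_pos[of t] by linarith
  then have "U_coord f A v0 rc v r = U_initial rc (\<gamma> v0)"
    using U_coord_eq_U_initial[OF \<gamma>(1) \<open>v0 \<le> v\<close>] \<gamma>(2) by simp
  with \<gamma> show thesis using that by blast
qed

lemma U_coord_initial_slice:
  assumes "rm v0 \<le> r" "r \<le> rp v0"
  shows "U_coord f A v0 rc v0 r = U_initial rc r"
  using horizon_band_solution[OF order.refl assms] by metis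

lemma U_coord_strict_antimono:
  assumes "v0 \<le> v" "rm v \<le> r1" "r1 < r2" "r2 \<le> rp v"
  shows "U_coord f A v0 rc v r2 < U_coord f A v0 rc v r1"
proof -
  obtain \<gamma>1 where \<gamma>1: "solves_ode g \<gamma>1 v0 v" "\<gamma>1 v = r1" "U_coord f A v0 rc v r1 = U_initial rc (\<gamma>1 v0)"
    using horizon_band_solution[of v r1] assms by auto
  obtain \<gamma>2 where \<gamma>2: "solves_ode g \<gamma>2 v0 v" "\<gamma>2 v = r2" "U_coord f A v0 rc v r2 = U_initial rc (\<gamma>2 v0)"
    using horizon_band_solution[of v r2] assms by auto
  have "\<gamma>1 v0 < \<gamma>2 v0"
    using solves_ode_less_backward[OF g_deriv gx_cont \<gamma>1(1) \<gamma>2(1)] assms \<gamma>1(2) \<gamma>2(2) by simp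
  then show ?thesis using \<gamma>1(3) \<gamma>2(3) U_initial_less_iff[OF rc_pos] by simp
qed

lemma U_coord_transport:
  assumes "v0 \<le> v" "v < v'" "rm v' \<le> r'" "r' \<le> rp v'"
  obtains r where "rm v < r" "r < rp v" "U_coord f A v0 rc v' r' = U_coord f A v0 rc v r"
proof -
  obtain \<gamma> where \<gamma>: "solves_ode g \<gamma> v0 v'" "\<gamma> v' = r'"
      "\<And>t. t \<in> {v0..<v'} \<Longrightarrow> rm t < \<gamma> t \<and> \<gamma> t < rp t"
      "U_coord f A v0 rc v' r' = U_initial rc (\<gamma> v0)"
    using horizon_band_solution[of v' r'] assms by auto
  have band: "rm v < \<gamma> v" "\<gamma> v < rp v" using \<gamma>(3)[of v] assms by auto
  have "U_coord f A v0 rc v (\<gamma> v) = U_initial rc (\<gamma> v0)"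
  proof (rule U_coord_eq_U_initial[OF solves_ode_subinterval[OF \<gamma>(1) order.refl]])
    fix t assume "t \<in> {v0..v}"
    then show "0 < \<gamma> t" using \<gamma>(3)[of t] rm_pos[of t] assms by force
  qed (use assms in auto)
  with band \<gamma>(4) show thesis using that by simp
qed

lemma U_outer_less_inner:
  assumes "v0 \<le> v"
  shows "U_coord f A v0 rc v (rp v) < U_coord f A v0 rc v (rm v)"
  using U_coord_strict_antimono[OF assms order.refl rm_less_rp order.refl] .

lemma U_outer_strict_mono:
  assumes "v0 \<le> v" "v < v'"
  shows "U_coord f A v0 rc v (rp v) < U_coord f A v0 rc v' (rp v')"
proof -
  obtain r where r: "rm v < r" "r < rp v" "U_coord f A v0 rc v' (rp v') = U_coord f A v0 rc v r"
    using U_coord_transport[OF assms less_imp_le[OF rm_less_rp] order.refl] by blast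
  show ?thesis
    using U_coord_strict_antimono[OF assms(1) less_imp_le[OF r(1)] r(2) order.refl] r(3) by simp
qed

lemma U_inner_strict_antimono:
  assumes "v0 \<le> v" "v < v'"
  shows "U_coord f A v0 rc v' (rm v') < U_coord f A v0 rc v (rm v)"
proof -
  obtain r where r: "rm v < r" "r < rp v" "U_coord f A v0 rc v' (rm v') = U_coord f A v0 rc v r"
    using U_coord_transport[OF assms order.refl less_imp_le[OF rm_less_rp]] by blast
  show ?thesis
    using U_coord_strict_antimono[OF assms(1) order.refl r(1) less_imp_le[OF r(2)]] r(3) by simp
qed

lemma U_horizons_converge:
  "\<exists>Upinf Uminf.
     ((\<lambda>v. U_coord f A v0 rc v (rp v)) \<longlongrightarrow> Upinf) at_top \<and>
     ((\<lambda>v. U_coord f A v0 rc v (rm v)) \<longlongrightarrow> Uminf) at_top \<and>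
     -1 < U_coord f A v0 rc v0 (rp v0) \<and>
     U_coord f A v0 rc v0 (rp v0) < Upinf \<and>
     Upinf \<le> Uminf \<and>
     Uminf < U_coord f A v0 rc v0 (rm v0) \<and>
     U_coord f A v0 rc v0 (rm v0) < 1 \<and>
     (Upinf = Uminf \<or> Upinf < Uminf)"
proof -
  define Up where "Up v = U_coord f A v0 rc v (rp v)" for v
  define Um where "Um v = U_coord f A v0 rc v (rm v)" for v
  have Up_less_Um: "Up v < Um v" if "v0 \<le> v" for v
    using U_outer_less_inner[OF that] by (simp add: Up_def Um_def)
  have Up_mono: "Up v < Up v'" and Um_antimono: "Um v' < Um v" if "v0 \<le> v" "v < v'" for v v'
    using U_outer_strict_mono[OF that] U_inner_strict_antimono[OF that] by (simp_all add: Up_def Um_def)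
  have "Up v \<le> Um v0" if "v0 \<le> v" for v
    using Up_less_Um[OF that] Um_antimono[of v0 v] that by (cases "v = v0") auto
  with Up_mono obtain Upinf where Up_lim: "(Up \<longlongrightarrow> Upinf) at_top"
      and Up_below: "\<And>v. v0 \<le> v \<Longrightarrow> Up v < Upinf"
    by (rule strict_mono_bounded_tendsto) auto
  have "- Um v < - Um v'" if "v0 \<le> v" "v < v'" for v v'
    using Um_antimono[OF that] by simp
  moreover have "- Um v \<le> - Up v0" if "v0 \<le> v" for v
    using Up_less_Um[OF that] Up_mono[of v0 v] that by (cases "v = v0") auto
  ultimately obtain Uminf' where Um_lim': "((\<lambda>v. - Um v) \<longlongrightarrow> Uminf') at_top"
      and Um_above: "\<And>v. v0 \<le> v \<Longrightarrow> - Um v < Uminf'"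
    by (rule strict_mono_bounded_tendsto) auto
  have Um_lim: "(Um \<longlongrightarrow> - Uminf') at_top"
    using tendsto_minus[OF Um_lim'] by simp
  have "Upinf \<le> - Uminf'"
    by (rule tendsto_le[OF _ Um_lim Up_lim])
      (auto simp: eventually_at_top_linorder intro!: exI[of _ v0] less_imp_le Up_less_Um)
  moreover have "-1 < Up v0" "Um v0 < 1"
    using U_coord_initial_slice[of "rp v0"] U_coord_initial_slice[of "rm v0"] rm_less_rp[of v0]
      U_initial_gt_minus_one U_initial_less_one[OF rm_pos rc_pos] by (simp_all add: Up_def Um_def)
  moreover have "Up v0 < Upinf" "- Uminf' < Um v0"
    using Up_below[of v0] Um_above[of v0] by auto
  ultimately show ?thesis
    using Up_lim Um_lim unfolding Up_def Um_def by (intro exI[of _ Upinf] exI[of _ "- Uminf'"]) auto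
qed

end

theorem theorem2:
  fixes f A F fr Ar :: "real \<Rightarrow> real \<Rightarrow> real"
    and rp rm :: "real \<Rightarrow> real"
    and rc v0 :: real
  assumes A_pos: "\<And>v r. A v r > 0"
    and f_cont: "continuous_on UNIV (\<lambda>p. f (fst p) (snd p))"
    and A_cont: "continuous_on UNIV (\<lambda>p. A (fst p) (snd p))"
    and f_dr: "\<And>v r. ((\<lambda>s. f v s) has_real_derivative fr v r) (at r)"
    and A_dr: "\<And>v r. ((\<lambda>s. A v s) has_real_derivative Ar v r) (at r)"
    and fr_cont: "continuous_on UNIV (\<lambda>p. fr (fst p) (snd p))"
    and Ar_cont: "continuous_on UNIV (\<lambda>p. Ar (fst p) (snd p))"
    and f_infty: "\<And>v. ((\<lambda>r. f v r) \<longlongrightarrow> 1) at_top"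
    and A_infty: "\<And>v. ((\<lambda>r. A v r) \<longlongrightarrow> 1) at_top"
    and f_centre: "\<And>v. f v 0 = 1"
    and fr_centre: "\<And>v. fr v 0 = 0"
    and Ar_centre: "\<And>v. Ar v 0 = 0"
    and horizons: "\<And>v. 0 < rm v \<and> rm v < rp v"
    and F_pos: "\<And>v r. F v r > 0"
    and factor: "\<And>v r. f v r = F v r * (r - rp v) * (r - rm v)"
    and rp_diff: "\<And>v. rp differentiable (at v)"
    and rp_decr: "\<And>v. deriv rp v < 0"
    and rp_lim: "(rp \<longlongrightarrow> rc) at_top"
    and rm_lim: "(rm \<longlongrightarrow> rc) at_top"
    and rm_diff: "\<And>v. rm differentiable (at v)"
    and case2: "\<And>v. deriv rm v > 0"
    and h_smooth: "\<And>n v r. r > 0 \<Longrightarrow> (deriv ^^ n) (\<lambda>s. A v s * F v s) differentiable (at r)"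
    and h_limit: "\<exists>hinf. (\<forall>r>0. real_analytic_at hinf r) \<and>
        (\<forall>n. \<forall>r>0. ((\<lambda>v. (deriv ^^ n) (\<lambda>s. A v s * F v s) r) \<longlongrightarrow> (deriv ^^ n) hinf r) at_top)"
  shows "\<exists>Upinf Uminf.
     ((\<lambda>v. U_coord f A v0 rc v (rp v)) \<longlongrightarrow> Upinf) at_top \<and>
     ((\<lambda>v. U_coord f A v0 rc v (rm v)) \<longlongrightarrow> Uminf) at_top \<and>
     -1 < U_coord f A v0 rc v0 (rp v0) \<and>
     U_coord f A v0 rc v0 (rp v0) < Upinf \<and>
     Upinf \<le> Uminf \<and>
     Uminf < U_coord f A v0 rc v0 (rm v0) \<and>
     U_coord f A v0 rc v0 (rm v0) < 1 \<and>
     (Upinf = Uminf \<or> Upinf < Uminf)"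
proof -
  define g where "g t x = f t x * A t x / 2" for t x
  define gx where "gx t x = (fr t x * A t x + f t x * Ar t x) / 2" for t x
  interpret case2_spacetime g gx rp rm "deriv rp" "deriv rm" f A rc v0
  proof
    show "continuous_on UNIV (\<lambda>p. g (fst p) (snd p))"
      unfolding g_def by (intro continuous_intros f_cont A_cont) auto
    show "(g t has_real_derivative gx t x) (at x)" for t x
      unfolding g_def[abs_def] gx_def using f_dr A_dr by (auto intro!: derivative_eq_intros)
    show "continuous_on UNIV (\<lambda>p. gx (fst p) (snd p))"
      unfolding gx_def by (intro continuous_intros f_cont A_cont fr_cont Ar_cont) auto
    show "(rp has_real_derivative deriv rp t) (at t)" "(rm has_real_derivative deriv rm t) (at t)" for t
      using rp_diff rm_diff by (simp_all add: DERIV_deriv_iff_real_differentiable)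
    show "g t (rp t) = 0" "g t (rm t) = 0" for t
      by (simp_all add: g_def factor)
  qed (use horizons rp_decr case2 rm_lim in \<open>simp_all add: g_def\<close>)
  show ?thesis by (rule U_horizons_converge)
qed

end
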